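(* Assume the setting described in the context. Let $\ldots\sigma_1\xrightarrow{u_1}\sigma_2\xrightarrow{u_2}\cdots\sigma_k\xrightarrow{u_k}\sigma_{k+1}\ldots$ be (a segment of) a walk with $k\ge1$. Suppose that at least one of the following holds: (a) $u_k\notin F_{\sigma_1}$; (b) $k\ge2$ and $u_1=u_k$. Then there exists $i\in[k-1]$ with $u_i\sim u_k$.
   Context: Setting: $\Omega$ is a finite set and $F$ a finite set of flaws, each a nonempty subset of $\Omega$; $F_\sigma=\{f:\sigma\in f\}$. For $\sigma\in\Omega$ and $f\in F_\sigma$ there is a probability distribution $\rho(\cdot\mid f,\sigma)$ with support $A(f,\sigma)$. A walk is a sequence of steps $\sigma\xrightarrow{f}\sigma'$ with $f\in F_\sigma$ and $\sigma'\in A(f,\sigma)$, each step starting at the state where the previous one ended. $\sim$ is a symmetric relation on $F$ (loops allowed), with $\Gamma(f)=\{g:f\sim g\}$. It is assumed that $(F,\sim)$ is a potential causality graph: for every step $\sigma\xrightarrow{f}\sigma'$, $F_{\sigma'}\subseteq(F_\sigma\setminus\{f\})\cup\Gamma(f)$. *)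

theory Defs
  imports "HOL-Probability.Probability_Mass_Function"
begin

definition flaws_at :: "'a set set \<Rightarrow> 'a \<Rightarrow> 'a set set" where
  "flaws_at F \<sigma> = {f \<in> F. \<sigma> \<in> f}"

definition Gam :: "'a set set \<Rightarrow> ('a set \<Rightarrow> 'a set \<Rightarrow> bool) \<Rightarrow> 'a set \<Rightarrow> 'a set set" where
  "Gam F adj f = {g \<in> F. adj f g}"

definition step :: "'a set \<Rightarrow> 'a set set \<Rightarrow> ('a set \<Rightarrow> 'a \<Rightarrow> 'a pmf) \<Rightarrow> 'a \<Rightarrow> 'a set \<Rightarrow> 'a \<Rightarrow> bool" where
  "step \<Omega> F \<rho> \<sigma> f \<sigma>' \<longleftrightarrow> \<sigma> \<in> \<Omega> \<and> f \<in> flaws_at F \<sigma> \<and> \<sigma>' \<in> set_pmf (\<rho> f \<sigma>)"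

definition flaw_setting :: "'a set \<Rightarrow> 'a set set \<Rightarrow> ('a set \<Rightarrow> 'a \<Rightarrow> 'a pmf) \<Rightarrow> bool" where
  "flaw_setting \<Omega> F \<rho> \<longleftrightarrow> finite \<Omega> \<and> finite F \<and> (\<forall>f\<in>F. f \<noteq> {} \<and> f \<subseteq> \<Omega>) \<and>
     (\<forall>\<sigma>\<in>\<Omega>. \<forall>f\<in>flaws_at F \<sigma>. set_pmf (\<rho> f \<sigma>) \<subseteq> \<Omega>)"

definition potential_causality :: "'a set \<Rightarrow> 'a set set \<Rightarrow> ('a set \<Rightarrow> 'a \<Rightarrow> 'a pmf) \<Rightarrow> ('a set \<Rightarrow> 'a set \<Rightarrow> bool) \<Rightarrow> bool" where
  "potential_causality \<Omega> F \<rho> adj \<longleftrightarrow>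
     (\<forall>f g. adj f g \<longrightarrow> f \<in> F \<and> g \<in> F) \<and> (\<forall>f g. adj f g \<longrightarrow> adj g f) \<and>
     (\<forall>\<sigma> f \<sigma>'. step \<Omega> F \<rho> \<sigma> f \<sigma>' \<longrightarrow>
        flaws_at F \<sigma>' \<subseteq> (flaws_at F \<sigma> - {f}) \<union> Gam F adj f)"

end

theory Submission
  imports Defs
begin

text \<open>A flaw present after a step was either present before it and not the flaw addressed,
  or was caused by it and is hence adjacent to the addressed flaw. Following a walk backwards
  from \<open>\<sigma>\<^sub>k\<close>, as long as \<open>u\<^sub>k\<close> is adjacent to none of the flaws addressed, it
  must have been present all along and never been addressed; this contradicts both (a) and (b).\<close>

lemma flaw_before_step:
  assumes "potential_causality \<Omega> F \<rho> adj"
    and "step \<Omega> F \<rho> \<sigma> f \<sigma>'"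
    and "g \<in> flaws_at F \<sigma>'"
    and "\<not> adj f g"
  shows "g \<in> flaws_at F \<sigma>" and "g \<noteq> f"
proof -
  have "g \<in> (flaws_at F \<sigma> - {f}) \<union> Gam F adj f"
    using assms(1-3) unfolding potential_causality_def by blast
  then show "g \<in> flaws_at F \<sigma>" and "g \<noteq> f"
    using assms(4) unfolding Gam_def by auto
qed

lemma flaw_before_walk_segment:
  assumes pc: "potential_causality \<Omega> F \<rho> adj"
    and "a \<le> b"
    and walk: "\<forall>i\<in>{a..<b}. step \<Omega> F \<rho> (\<sigma> i) (u i) (\<sigma> (Suc i))"
    and "g \<in> flaws_at F (\<sigma> b)"
    and not_adj: "\<forall>i\<in>{a..<b}. \<not> adj (u i) g"
  shows "g \<in> flaws_at F (\<sigma> a) \<and> (\<forall>i\<in>{a..<b}. u i \<noteq> g)"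
  using \<open>a \<le> b\<close>
proof (induction a rule: inc_induct)
  case base
  then show ?case using assms(4) by simp
next
  case (step n)
  have "n \<in> {a..<b}" using step.hyps by simp
  then have "step \<Omega> F \<rho> (\<sigma> n) (u n) (\<sigma> (Suc n))" and "\<not> adj (u n) g"
    using walk not_adj by auto
  moreover have "g \<in> flaws_at F (\<sigma> (Suc n))" using step.IH by simp
  ultimately have "g \<in> flaws_at F (\<sigma> n)" and "g \<noteq> u n"
    using flaw_before_step[OF pc] by blast+
  with step.IH show ?case by (auto simp: less_Suc_eq_le order.order_iff_strict)
qed

theorem lemma2:
  fixes \<Omega> :: "'a set" and F :: "'a set set" and \<rho> :: "'a set \<Rightarrow> 'a \<Rightarrow> 'a pmf"
    and adj :: "'a set \<Rightarrow> 'a set \<Rightarrow> bool"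
    and \<sigma> :: "nat \<Rightarrow> 'a" and u :: "nat \<Rightarrow> 'a set" and k :: nat
  assumes "flaw_setting \<Omega> F \<rho>"
    and "potential_causality \<Omega> F \<rho> adj"
    and "k \<ge> 1"
    and walk: "\<forall>i\<in>{1..k}. step \<Omega> F \<rho> (\<sigma> i) (u i) (\<sigma> (i + 1))"
    and "u k \<notin> flaws_at F (\<sigma> 1) \<or> (k \<ge> 2 \<and> u 1 = u k)"
  shows "\<exists>i\<in>{1..k - 1}. adj (u i) (u k)"
proof (rule ccontr)
  assume "\<not> (\<exists>i\<in>{1..k - 1}. adj (u i) (u k))"
  then have not_adj: "\<forall>i\<in>{1..<k}. \<not> adj (u i) (u k)" by auto
  have "u k \<in> flaws_at F (\<sigma> k)"
    using walk \<open>k \<ge> 1\<close> unfolding step_def by auto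
  moreover have "\<forall>i\<in>{1..<k}. step \<Omega> F \<rho> (\<sigma> i) (u i) (\<sigma> (Suc i))"
    using walk by auto
  ultimately have "u k \<in> flaws_at F (\<sigma> 1) \<and> (\<forall>i\<in>{1..<k}. u i \<noteq> u k)"
    using flaw_before_walk_segment[OF assms(2) \<open>k \<ge> 1\<close>] not_adj by blast
  then show False using assms(5) by auto
qed

end
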